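(* For every $n\ge 0$, $|P_n^2|$ is at most the number of words of length $3n$ over the alphabet $\{m_1,m_2,m_3\}$ that contain none of $m_1m_3$, $m_1m_2m_2m_3$, $m_1m_2m_3m_2$ as a (contiguous) factor. This number equals $[x^{3n}]\,U(x)$ where $U(x)=\dfrac{1}{1-3x+x^2+2x^4}$, and consequently $|P_n^2|\in O(14.864^n)$.
   Context: A system of $2$ stacks in series consists of an input queue, stack 1, stack 2, and an output queue. Moves: $m_1$ moves the front of the input queue onto stack 1; $m_2$ pops stack 1 and pushes onto stack 2; $m_3$ pops stack 2 and enqueues at the back of the output queue. A word $w$ over $\{m_1,m_2,m_3\}$ acts on states by applying moves left to right (illegal if a move's source is empty). $I(n,2)$ is the state with $1,\dots,n$ in the input queue (front to back) and everything else empty; for $\pi\in S_n$, $t_\pi$ is the state with only the output queue nonempty, containing $\pi(1),\dots,\pi(n)$ front to back. $P_n^2\subseteq S_n$ is the set of $\pi$ such that some word $w$ legally transforms $I(n,2)$ into $t_\pi$. $[x^N]F(x)$ denotes the coefficient of $x^N$ in the power series $F$. *)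

theory Defs
  imports "HOL-Library.Sublist" "HOL-Library.Landau_Symbols"
    "HOL-Computational_Algebra.Formal_Power_Series"
    "HOL-Combinatorics.Permutations"
begin

datatype move = m1 | m2 | m3

text \<open>State: (input queue front-to-back, stack 1 top-first, stack 2 top-first,
  output queue front-to-back).\<close>
type_synonym state = "nat list \<times> nat list \<times> nat list \<times> nat list"

fun step :: "move \<Rightarrow> state \<Rightarrow> state option" where
  "step m1 (x # inp, s1, s2, out) = Some (inp, x # s1, s2, out)"
| "step m1 ([], s1, s2, out) = None"
| "step m2 (inp, x # s1, s2, out) = Some (inp, s1, x # s2, out)"
| "step m2 (inp, [], s2, out) = None"
| "step m3 (inp, s1, x # s2, out) = Some (inp, s1, s2, out @ [x])"
| "step m3 (inp, s1, [], out) = None"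

fun run :: "move list \<Rightarrow> state \<Rightarrow> state option" where
  "run [] s = Some s"
| "run (m # w) s = Option.bind (step m s) (run w)"

definition init_state :: "nat \<Rightarrow> state" where
  "init_state n = ([1..<n+1], [], [], [])"

definition target_state :: "(nat \<Rightarrow> nat) \<Rightarrow> nat \<Rightarrow> state" where
  "target_state \<pi> n = ([], [], [], map \<pi> [1..<n+1])"

definition P2 :: "nat \<Rightarrow> (nat \<Rightarrow> nat) set" where
  "P2 n = {\<pi>. \<pi> permutes {1..n} \<and> (\<exists>w. run w (init_state n) = Some (target_state \<pi> n))}"

definition avoiding_words :: "nat \<Rightarrow> move list set" where
  "avoiding_words n = {w. length w = 3 * n \<and> \<not> sublist [m1, m3] w
      \<and> \<not> sublist [m1, m2, m2, m3] w \<and> \<not> sublist [m1, m2, m3, m2] w}"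

definition U :: "real fps" where
  "U = inverse (1 - 3 * fps_X + fps_X ^ 2 + 2 * fps_X ^ 4)"

end

theory Submission imports Defs begin

(* Proof outline.
   (1) Every move lowers the potential 3|input| + 2|stack 1| + |stack 2| by one,
       so every word sorting I(n,2) into a target state has length 3n.
   (2) The factors m1m3, m1m2m2m3, m1m2m3m2 can be replaced by m3m1, m2m3m1m2,
       m2m1m2m3 without changing the effect of a word.  Each replacement strictly
       increases the number of pairs "non-m1 move before an m1 move", so a word of
       maximal such weight among all words with the same effect avoids the three
       factors.  Reading off the permutation written to the output queue thus
       maps the avoiding words of length 3n onto a set containing P_n^2.
   (3) Avoiding words are counted by a five-state transfer scheme: the number of
       completions of the prefixes [], m1, m1m2, m1m2m2, m1m2m3.  These satisfy
       linear recurrences whose elimination gives c(L+4) = 3c(L+3) - c(L+2) - 2c(L),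
       which is the recurrence of the coefficients of U.
   (4) A positive weighting of the five completion counts (an approximate left
       eigenvector of the transfer matrix) grows by at most 2.458735 per letter,
       and 2.458735^3 < 14.864, which yields the exponential bound. *)

lemma run_append: "run (xs @ ys) s = Option.bind (run xs s) (run ys)"
proof (induction xs arbitrary: s)
  case (Cons m xs)
  then show ?case by (cases "step m s") simp_all
qed simp

text \<open>Each element still has to make 3, 2 or 1 further moves depending on whether
  it is in the input queue, on stack 1 or on stack 2.\<close>
definition potential :: "state \<Rightarrow> nat" where
  "potential s = (case s of (inp, s1, s2, _) \<Rightarrow> 3 * length inp + 2 * length s1 + length s2)"

lemma step_potential: "step m s = Some s' \<Longrightarrow> potential s = Suc (potential s')"
  by (erule step.elims) (auto simp: potential_def)

lemma run_potential: "run w s = Some s' \<Longrightarrow> potential s = length w + potential s'"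
proof (induction w arbitrary: s)
  case (Cons m w)
  then obtain t where "step m s = Some t" "run w t = Some s'"
    by (cases "step m s") auto
  with Cons.IH step_potential show ?case by fastforce
qed simp

lemma sorting_word_length:
  "run w (init_state n) = Some (target_state \<pi> n) \<Longrightarrow> length w = 3 * n"
  using run_potential[of w "init_state n" "target_state \<pi> n"]
  by (simp del: upt_Suc add: potential_def init_state_def target_state_def)

lemma UNIV_move: "(UNIV :: move set) = {m1, m2, m3}"
  using move.exhaust by auto

instance move :: finite
  by standard (simp add: UNIV_move)

lemma finite_words_length: "finite {w :: 'a :: finite list. length w = L}"
  using finite_lists_length_eq[OF finite_UNIV, of L] by simp

lemma card_words_Suc:
  "card {w :: 'a :: finite list. length w = Suc L \<and> P w}
     = (\<Sum>x\<in>UNIV. card {w. length w = L \<and> P (x # w)})"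
proof -
  define A where "A x = {w. length w = L \<and> P (x # w)}" for x :: 'a
  have split: "{w. length w = Suc L \<and> P w} = (\<Union>x. Cons x ` A x)"
    by (auto simp: A_def length_Suc_conv)
  have "finite (A x)" for x
    unfolding A_def by (rule finite_subset[OF _ finite_words_length[of L]]) auto
  then have "card (\<Union>x. Cons x ` A x) = (\<Sum>x\<in>UNIV. card (Cons x ` A x))"
    by (intro card_UN_disjoint) auto
  then show ?thesis by (simp add: split card_image A_def)
qed

subsection \<open>Exchanging forbidden factors\<close>

lemma factor_exchanges:
  "run [m1, m3] s = Some t \<Longrightarrow> run [m3, m1] s = Some t"
  "run [m1, m2, m2, m3] s = Some t \<Longrightarrow> run [m2, m3, m1, m2] s = Some t"
  "run [m1, m2, m3, m2] s = Some t \<Longrightarrow> run [m2, m1, m2, m3] s = Some t"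
  by (auto split: option.splits bind_splits elim!: step.elims)

lemma run_exchange_factor:
  assumes "\<And>s t. run l s = Some t \<Longrightarrow> run r s = Some t"
    and "run (u @ l @ v) s = Some t"
  shows "run (u @ r @ v) s = Some t"
  using assms by (auto simp: run_append split: bind_splits)

fun delay :: "move list \<Rightarrow> nat" where
  "delay [] = 0"
| "delay (x # w) = (if x = m1 then 0 else count_list w m1) + delay w"

lemma delay_append:
  "delay (xs @ ys) + count_list xs m1 * count_list ys m1
     = delay xs + delay ys + length xs * count_list ys m1"
  by (induction xs) (auto simp: algebra_simps)

lemma delay_exchange_factor:
  assumes "length l = length r" "count_list l m1 = count_list r m1" "delay l < delay r"
  shows "delay (u @ l @ v) < delay (u @ r @ v)"
  using assms delay_append[of u "l @ v"] delay_append[of u "r @ v"]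
    delay_append[of l v] delay_append[of r v] by simp

definition avoids :: "move list \<Rightarrow> bool" where
  "avoids w \<longleftrightarrow> \<not> sublist [m1, m3] w \<and> \<not> sublist [m1, m2, m2, m3] w \<and> \<not> sublist [m1, m2, m3, m2] w"

text \<open>Any effect achievable by a word is achievable by an avoiding word of the same
  length: take a word of maximal delay among all words with that effect.\<close>
lemma exists_avoiding_run:
  assumes "run w0 s = Some t"
  shows "\<exists>w. length w = length w0 \<and> avoids w \<and> run w s = Some t"
proof -
  define W where "W = {w. length w = length w0 \<and> run w s = Some t}"
  have "finite W"
    by (rule finite_subset[OF _ finite_words_length[of "length w0"]]) (auto simp: W_def)
  moreover have "W \<noteq> {}" using assms by (auto simp: W_def)
  ultimately obtain w where "w \<in> W" and maximal: "\<And>w'. w' \<in> W \<Longrightarrow> delay w' \<le> delay w"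
    using Max_in[of "delay ` W"] Max_ge[of "delay ` W"] by fastforce
  have no_factor: "\<not> sublist l w"
    if exch: "\<And>s t. run l s = Some t \<Longrightarrow> run r s = Some t" and "length l = length r"
      and "count_list l m1 = count_list r m1" "delay l < delay r" for l r
  proof
    assume "sublist l w"
    then obtain u v where w: "w = u @ l @ v" by (auto simp: sublist_def)
    with \<open>w \<in> W\<close> run_exchange_factor[OF exch] \<open>length l = length r\<close>
    have "u @ r @ v \<in> W" by (auto simp: W_def)
    with maximal w delay_exchange_factor[OF that(2-4), of u v] show False by fastforce
  qed
  have "avoids w"
    unfolding avoids_def
    using no_factor[of "[m1, m3]" "[m3, m1]"] no_factor[of "[m1, m2, m2, m3]" "[m2, m3, m1, m2]"]
      no_factor[of "[m1, m2, m3, m2]" "[m2, m1, m2, m3]"] factor_exchanges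
    by simp
  with \<open>w \<in> W\<close> show ?thesis by (auto simp: W_def)
qed

definition output_perm :: "nat \<Rightarrow> move list \<Rightarrow> nat \<Rightarrow> nat" where
  "output_perm n w i =
     (if i \<in> {1..n}
      then (case run w (init_state n) of Some (_, _, _, out) \<Rightarrow> out ! (i - 1) | None \<Rightarrow> i)
      else i)"

lemma output_perm_eq:
  assumes "\<pi> permutes {1..n}" and "run w (init_state n) = Some (target_state \<pi> n)"
  shows "output_perm n w = \<pi>"
proof
  fix i
  show "output_perm n w i = \<pi> i"
    using assms permutes_not_in[OF assms(1), of i]
    by (auto simp del: upt_Suc simp: output_perm_def target_state_def)
qed

lemma avoiding_words_eq: "avoiding_words n = {w. length w = 3 * n \<and> avoids w}"
  unfolding avoiding_words_def avoids_def by simp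

text \<open>Every permutation in P_n^2 is produced by an avoiding word of length 3n.\<close>
lemma card_P2_le: "card (P2 n) \<le> card (avoiding_words n)"
proof -
  have "P2 n \<subseteq> output_perm n ` avoiding_words n"
  proof
    fix \<pi> assume "\<pi> \<in> P2 n"
    then obtain w0 where perm: "\<pi> permutes {1..n}"
      and run: "run w0 (init_state n) = Some (target_state \<pi> n)"
      by (auto simp: P2_def)
    from exists_avoiding_run[OF run] obtain w where
      "length w = length w0" "avoids w" "run w (init_state n) = Some (target_state \<pi> n)"
      by blast
    with sorting_word_length[OF run] output_perm_eq[OF perm] show "\<pi> \<in> output_perm n ` avoiding_words n"
      by (auto simp: avoiding_words_eq)
  qed
  moreover have "finite (avoiding_words n)"
    unfolding avoiding_words_eq by (rule finite_subset[OF _ finite_words_length]) auto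
  ultimately show ?thesis
    by (meson card_image_le card_mono finite_imageI order_trans)
qed

subsection \<open>Counting avoiding words\<close>

text \<open>The number of words of length L that extend the prefix u to an avoiding word.
  Only the prefixes [], m1, m1m2, m1m2m2, m1m2m3 (the states of the pattern
  automaton) are needed.\<close>
definition completions :: "move list \<Rightarrow> nat \<Rightarrow> nat" where
  "completions u L = card {w. length w = L \<and> avoids (u @ w)}"

lemma card_avoiding_words_completions: "card (avoiding_words n) = completions [] (3 * n)"
  by (simp add: avoiding_words_eq completions_def)

lemma completions_Suc:
  "completions u (Suc L) = completions (u @ [m1]) L + completions (u @ [m2]) L + completions (u @ [m3]) L"
  unfolding completions_def card_words_Suc UNIV_move by simp

lemma completions_0:
  assumes "avoids u" shows "completions u 0 = 1"
proof -
  have "{w. length w = 0 \<and> avoids (u @ w)} = {[]}" using assms by auto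
  then show ?thesis by (simp add: completions_def)
qed

lemma avoids_Cons:
  "avoids (x # w) \<longleftrightarrow> avoids w \<and> \<not> prefix [m1, m3] (x # w)
     \<and> \<not> prefix [m1, m2, m2, m3] (x # w) \<and> \<not> prefix [m1, m2, m3, m2] (x # w)"
  unfolding avoids_def by (auto simp: sublist_Cons_right)

lemma avoids_transitions:
  "avoids (m2 # w) = avoids w" "avoids (m3 # w) = avoids w"
  "avoids (m1 # m1 # w) = avoids (m1 # w)" "avoids (m1 # m3 # w) = False"
  "avoids (m1 # m2 # m1 # w) = avoids (m1 # w)"
  "avoids (m1 # m2 # m2 # m1 # w) = avoids (m1 # w)"
  "avoids (m1 # m2 # m2 # m2 # w) = avoids w"
  "avoids (m1 # m2 # m2 # m3 # w) = False"
  "avoids (m1 # m2 # m3 # m1 # w) = avoids (m1 # w)"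
  "avoids (m1 # m2 # m3 # m2 # w) = False"
  "avoids (m1 # m2 # m3 # m3 # w) = avoids w"
  by (simp_all add: avoids_Cons)

lemma completions_recurrences:
  "completions [] (Suc L) = completions [m1] L + 2 * completions [] L"
  "completions [m1] (Suc L) = completions [m1] L + completions [m1, m2] L"
  "completions [m1, m2] (Suc L)
     = completions [m1] L + completions [m1, m2, m2] L + completions [m1, m2, m3] L"
  "completions [m1, m2, m2] (Suc L) = completions [m1] L + completions [] L"
  "completions [m1, m2, m3] (Suc L) = completions [m1] L + completions [] L"
  unfolding completions_Suc by (simp_all add: completions_def avoids_transitions)

lemma completions_initial:
  "completions [] 0 = 1" "completions [m1] 0 = 1" "completions [m1, m2] 0 = 1"
  "completions [m1, m2, m2] 0 = 1" "completions [m1, m2, m3] 0 = 1"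
  by (simp_all add: completions_0 avoids_def sublist_Cons_right)

text \<open>Eliminating the other four sequences yields the recurrence of the
  denominator of U.\<close>
lemma avoiding_count_recurrence:
  "completions [] (L + 4) + completions [] (L + 2) + 2 * completions [] L
     = 3 * completions [] (L + 3)"
  using completions_recurrences[of L] completions_recurrences[of "Suc L"]
    completions_recurrences[of "Suc (Suc L)"] completions_recurrences[of "Suc (Suc (Suc L))"]
  by (simp add: numeral_eq_Suc)

lemma avoiding_count_initial:
  "completions [] 0 = 1" "completions [] 1 = 3" "completions [] 2 = 8" "completions [] 3 = 21"
  using completions_initial completions_recurrences[of 0] completions_recurrences[of 1]
    completions_recurrences[of 2]
  by (simp_all add: numeral_eq_Suc)

lemma recurrence4_unique:
  fixes a b :: "nat \<Rightarrow> 'a"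
  assumes a: "\<And>k. a (k + 4) = R (a k) (a (k + 1)) (a (k + 2)) (a (k + 3))"
    and b: "\<And>k. b (k + 4) = R (b k) (b (k + 1)) (b (k + 2)) (b (k + 3))"
    and "a 0 = b 0" "a 1 = b 1" "a 2 = b 2" "a 3 = b 3"
  shows "a k = b k"
proof -
  have "a k = b k \<and> a (k + 1) = b (k + 1) \<and> a (k + 2) = b (k + 2) \<and> a (k + 3) = b (k + 3)"
  proof (induction k)
    case (Suc k)
    then have "a (k + 4) = b (k + 4)" by (simp add: a b)
    with Suc show ?case by (simp add: numeral_eq_Suc)
  qed (use assms in \<open>simp add: numeral_eq_Suc\<close>)
  then show ?thesis ..
qed

text \<open>Comparing coefficients in U * (1 - 3x + x^2 + 2x^4) = 1.\<close>
lemma U_coeff: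
  "fps_nth U k - 3 * (if k < 1 then 0 else fps_nth U (k - 1))
     + (if k < 2 then 0 else fps_nth U (k - 2)) + 2 * (if k < 4 then 0 else fps_nth U (k - 4))
   = (if k = 0 then 1 else 0)"
proof -
  have "U * (1 - 3 * fps_X + fps_X ^ 2 + 2 * fps_X ^ 4) = 1"
    unfolding U_def by (rule inverse_mult_eq_1) simp
  moreover have "U * (1 - 3 * fps_X + fps_X ^ 2 + 2 * fps_X ^ 4)
      = U - fps_const 3 * (fps_X ^ 1 * U) + fps_X ^ 2 * U + fps_const 2 * (fps_X ^ 4 * U)"
    by (simp add: algebra_simps numeral_fps_const)
  ultimately have "fps_nth (U - fps_const 3 * (fps_X ^ 1 * U) + fps_X ^ 2 * U
      + fps_const 2 * (fps_X ^ 4 * U)) k = fps_nth (1 :: real fps) k"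
    by simp
  then show ?thesis
    by (simp only: fps_add_nth fps_sub_nth fps_mult_left_const_nth fps_X_power_mult_nth fps_one_nth)
qed

lemma U_recurrence:
  "fps_nth U (k + 4) = 3 * fps_nth U (k + 3) - fps_nth U (k + 2) - 2 * fps_nth U k"
  using U_coeff[of "k + 4"] by (simp add: numeral_eq_Suc)

lemma U_initial: "fps_nth U 0 = 1" "fps_nth U 1 = 3" "fps_nth U 2 = 8" "fps_nth U 3 = 21"
  using U_coeff[of 0] U_coeff[of 1] U_coeff[of 2] U_coeff[of 3] by simp_all

lemma card_avoiding_words_U: "real (card (avoiding_words n)) = fps_nth U (3 * n)"
proof -
  have "real (completions [] L) = fps_nth U L" for L
  proof (rule recurrence4_unique[where R = "\<lambda>x y z t. 3 * t - z - 2 * x"])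
    show "real (completions [] (k + 4))
        = 3 * real (completions [] (k + 3)) - real (completions [] (k + 2)) - 2 * real (completions [] k)"
      for k using arg_cong[OF avoiding_count_recurrence[of k], of real] by simp
    show "fps_nth U (k + 4) = 3 * fps_nth U (k + 3) - fps_nth U (k + 2) - 2 * fps_nth U k" for k
      by (rule U_recurrence)
    show "real (completions [] 0) = fps_nth U 0" "real (completions [] 1) = fps_nth U 1"
      "real (completions [] 2) = fps_nth U 2" "real (completions [] 3) = fps_nth U 3"
      using U_initial avoiding_count_initial by simp_all
  qed
  then show ?thesis by (simp add: card_avoiding_words_completions)
qed

subsection \<open>Exponential growth\<close>

text \<open>A positive weighting of the five completion counts; the weights approximate a
  left eigenvector of the transfer matrix for its dominant eigenvalue 2.45873...\<close>
definition weighted_completions :: "nat \<Rightarrow> real" where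
  "weighted_completions L = 1773194586 * real (completions [] L)
     + 2458735000 * real (completions [m1] L) + 1000000000 * real (completions [m1, m2] L)
     + 406713209 * (real (completions [m1, m2, m2] L) + real (completions [m1, m2, m3] L))"

lemma weighted_completions_step:
  "weighted_completions (Suc L) \<le> 2.458735 * weighted_completions L"
proof -
  have "real (completions u L) \<ge> 0" for u by simp
  then show ?thesis
    unfolding weighted_completions_def completions_recurrences
    by (simp add: ring_distribs)
qed

lemma weighted_completions_bound:
  "weighted_completions L \<le> 2.458735 ^ L * weighted_completions 0"
proof (induction L)
  case (Suc L)
  have "weighted_completions (Suc L) \<le> 2.458735 * weighted_completions L"
    by (rule weighted_completions_step)
  also have "\<dots> \<le> 2.458735 * (2.458735 ^ L * weighted_completions 0)"
    using Suc by simp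
  finally show ?case by simp
qed simp

lemma card_P2_exponential_bound:
  "real (card (P2 n)) \<le> weighted_completions 0 / 1773194586 * 14.864 ^ n"
proof -
  have "1773194586 * real (card (P2 n)) \<le> 1773194586 * real (completions [] (3 * n))"
    using card_P2_le[of n] by (simp add: card_avoiding_words_completions)
  also have "\<dots> \<le> weighted_completions (3 * n)"
    by (simp add: weighted_completions_def)
  also have "\<dots> \<le> (2.458735 ^ 3) ^ n * weighted_completions 0"
    using weighted_completions_bound[of "3 * n"] by (simp add: power_mult)
  also have "\<dots> \<le> 14.864 ^ n * weighted_completions 0"
    by (intro mult_right_mono power_mono) (simp_all add: weighted_completions_def power3_eq_cube)
  finally show ?thesis by (simp add: field_simps)
qed

theorem mainTheorem10:
  shows "(\<forall>n. card (P2 n) \<le> card (avoiding_words n)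
              \<and> real (card (avoiding_words n)) = fps_nth U (3 * n))
         \<and> (\<lambda>n. real (card (P2 n))) \<in> O(\<lambda>n. 14.864 ^ n)"
proof (intro conjI allI)
  fix n
  show "card (P2 n) \<le> card (avoiding_words n)" by (rule card_P2_le)
  show "real (card (avoiding_words n)) = fps_nth U (3 * n)" by (rule card_avoiding_words_U)
next
  show "(\<lambda>n. real (card (P2 n))) \<in> O(\<lambda>n. 14.864 ^ n)"
    by (intro bigoI[where c = "weighted_completions 0 / 1773194586"] always_eventually allI)
      (use card_P2_exponential_bound in simp)
qed

end
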